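(* Consider the augmented network and weighted waterfilling map $\theta\mapsto g(\theta)$ defined in the context. Suppose $\theta=(\theta_{k,p})$ is a vector of strictly positive weights that is a fixed point of the adaptive waterfiller update, i.e. $$\theta_{k,p}=\frac{g_{k,p}(\theta)}{\sum_{p'\in\mathcal{P}_k}g_{k,p'}(\theta)}\quad\text{for all }k\in\mathcal{D},\ p\in\mathcal{P}_k$$ (with all denominators positive). Then the subflow allocation $g(\theta)$ is bandwidth-bottlenecked.
   Context: Demands $\mathcal{D}$, links $\mathcal{E}$ with capacities $c_e>0$, each demand $k$ with requested rate $d_k>0$ and finite path set $\mathcal{P}_k$ (paths are subsets of $\mathcal{E}$). Each pair $(k,p)$, $p\in\mathcal{P}_k$, is a subflow. Augmented network: in addition to the links in $\mathcal{E}$, each demand $k$ has a virtual link $v_k$ of capacity $d_k$; subflow $(k,p)$ traverses the links of $p$ together with $v_k$. A subflow allocation $g=(g_{k,p})\ge 0$ is feasible if $\sum_{(k,p):e\in p}g_{k,p}\le c_e$ for all $e\in\mathcal{E}$ and $\sum_{p\in\mathcal{P}_k}g_{k,p}\le d_k$ for all $k$; its demand totals are $f_k=\sum_{p\in\mathcal{P}_k}g_{k,p}$. A link is saturated if its capacity constraint holds with equality. Given strictly positive weights $\theta$, the weighted waterfilling solution $g(\theta)$ is the (standardly unique) feasible subflow allocation in which every subflow $(k,p)$ has a weighted bottleneck: a saturated link $l$ on the augmented path of $(k,p)$ such that $g_{k,p}/\theta_{k,p}\ge g_{j,p'}/\theta_{j,p'}$ for every subflow $(j,p')$ traversing $l$.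 A feasible subflow allocation $g$ with totals $f$ is bandwidth-bottlenecked if for every demand $k$ and every $p\in\mathcal{P}_k$ there is a saturated link $l$ on the augmented path of $(k,p)$ such that $f_k\ge f_j$ for every demand $j$ having a subflow with positive rate traversing $l$. *)

theory Defs
  imports Complex_Main
begin

text \<open>Network data: demands D (type 'd), links E (type 'e), capacities c,
requested rates dr, path sets P.  Augmented links are Inl e (real link e)
and Inr k (virtual link v_k of demand k).\<close>

definition subflows :: "'d set \<Rightarrow> ('d \<Rightarrow> 'e set set) \<Rightarrow> ('d \<times> 'e set) set" where
  "subflows D P = {(k, p). k \<in> D \<and> p \<in> P k}"

definition aug_links :: "'d set \<Rightarrow> 'e set \<Rightarrow> ('e + 'd) set" where
  "aug_links D E = Inl ` E \<union> Inr ` D"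

definition aug_path :: "'d \<Rightarrow> 'e set \<Rightarrow> ('e + 'd) set" where
  "aug_path k p = Inl ` p \<union> {Inr k}"

definition aug_cap :: "('e \<Rightarrow> real) \<Rightarrow> ('d \<Rightarrow> real) \<Rightarrow> ('e + 'd) \<Rightarrow> real" where
  "aug_cap c dr l = (case l of Inl e \<Rightarrow> c e | Inr k \<Rightarrow> dr k)"

definition load ::
  "'d set \<Rightarrow> ('d \<Rightarrow> 'e set set) \<Rightarrow> ('d \<Rightarrow> 'e set \<Rightarrow> real) \<Rightarrow> ('e + 'd) \<Rightarrow> real" where
  "load D P g l = (\<Sum>(k, p) \<in> {(k, p) \<in> subflows D P. l \<in> aug_path k p}. g k p)"

definition total :: "('d \<Rightarrow> 'e set set) \<Rightarrow> ('d \<Rightarrow> 'e set \<Rightarrow> real) \<Rightarrow> 'd \<Rightarrow> real" where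
  "total P g k = (\<Sum>p \<in> P k. g k p)"

definition feasible ::
  "'d set \<Rightarrow> 'e set \<Rightarrow> ('e \<Rightarrow> real) \<Rightarrow> ('d \<Rightarrow> real) \<Rightarrow> ('d \<Rightarrow> 'e set set)
   \<Rightarrow> ('d \<Rightarrow> 'e set \<Rightarrow> real) \<Rightarrow> bool" where
  "feasible D E c dr P g \<longleftrightarrow>
     (\<forall>(k, p) \<in> subflows D P. 0 \<le> g k p) \<and>
     (\<forall>e \<in> E. load D P g (Inl e) \<le> c e) \<and>
     (\<forall>k \<in> D. total P g k \<le> dr k)"

definition saturated ::
  "('e \<Rightarrow> real) \<Rightarrow> ('d \<Rightarrow> real) \<Rightarrow> 'd set \<Rightarrow> ('d \<Rightarrow> 'e set set)
   \<Rightarrow> ('d \<Rightarrow> 'e set \<Rightarrow> real) \<Rightarrow> ('e + 'd) \<Rightarrow> bool" where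
  "saturated c dr D P g l \<longleftrightarrow> load D P g l = aug_cap c dr l"

definition weighted_waterfilling ::
  "'d set \<Rightarrow> 'e set \<Rightarrow> ('e \<Rightarrow> real) \<Rightarrow> ('d \<Rightarrow> real) \<Rightarrow> ('d \<Rightarrow> 'e set set)
   \<Rightarrow> ('d \<Rightarrow> 'e set \<Rightarrow> real) \<Rightarrow> ('d \<Rightarrow> 'e set \<Rightarrow> real) \<Rightarrow> bool" where
  "weighted_waterfilling D E c dr P \<theta> g \<longleftrightarrow>
     feasible D E c dr P g \<and>
     (\<forall>(k, p) \<in> subflows D P. \<exists>l \<in> aug_path k p.
        saturated c dr D P g l \<and>
        (\<forall>(j, p') \<in> subflows D P. l \<in> aug_path j p' \<longrightarrow>
            g j p' / \<theta> j p' \<le> g k p / \<theta> k p))"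

definition bandwidth_bottlenecked ::
  "'d set \<Rightarrow> 'e set \<Rightarrow> ('e \<Rightarrow> real) \<Rightarrow> ('d \<Rightarrow> real) \<Rightarrow> ('d \<Rightarrow> 'e set set)
   \<Rightarrow> ('d \<Rightarrow> 'e set \<Rightarrow> real) \<Rightarrow> bool" where
  "bandwidth_bottlenecked D E c dr P g \<longleftrightarrow>
     feasible D E c dr P g \<and>
     (\<forall>k \<in> D. \<forall>p \<in> P k. \<exists>l \<in> aug_path k p.
        saturated c dr D P g l \<and>
        (\<forall>j \<in> D. (\<exists>p' \<in> P j. l \<in> aug_path j p' \<and> 0 < g j p') \<longrightarrow>
            total P g j \<le> total P g k))"

end

theory Submission
  imports Defs
begin

text \<open>At a fixed point of the adaptive update every subflow's normalised rate
\<open>g\<^sub>k\<^sub>,\<^sub>p / \<theta>\<^sub>k\<^sub>,\<^sub>p\<close> equals its demand total \<open>f\<^sub>k\<close>. The weighted bottleneck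
condition of the waterfilling solution, which compares normalised rates on a
saturated link, therefore compares demand totals, which is exactly the
bandwidth bottleneck condition.\<close>

lemma rate_div_weight_at_fixed_point:
  fixes r w t :: real
  assumes "0 < w" and "0 < t" and "w = r / t"
  shows "r / w = t"
  using assms by (auto simp: field_simps)

lemma weighted_waterfilling_imp_bandwidth_bottlenecked:
  assumes wf: "weighted_waterfilling D E c dr P \<theta> g"
    and normalised: "\<And>k p. k \<in> D \<Longrightarrow> p \<in> P k \<Longrightarrow> g k p / \<theta> k p = total P g k"
  shows "bandwidth_bottlenecked D E c dr P g"
  unfolding bandwidth_bottlenecked_def
proof (intro conjI ballI)
  show "feasible D E c dr P g"
    using wf by (simp add: weighted_waterfilling_def)
  fix k p assume k: "k \<in> D" and p: "p \<in> P k"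
  then obtain l where l: "l \<in> aug_path k p" "saturated c dr D P g l"
    and bottleneck: "\<And>j p'. j \<in> D \<Longrightarrow> p' \<in> P j \<Longrightarrow> l \<in> aug_path j p' \<Longrightarrow>
        g j p' / \<theta> j p' \<le> g k p / \<theta> k p"
    using wf by (fastforce simp: weighted_waterfilling_def subflows_def)
  have "total P g j \<le> total P g k"
    if "j \<in> D" and "\<exists>p' \<in> P j. l \<in> aug_path j p' \<and> 0 < g j p'" for j
    using that bottleneck normalised k p by force
  with l show "\<exists>l \<in> aug_path k p. saturated c dr D P g l \<and>
      (\<forall>j \<in> D. (\<exists>p' \<in> P j. l \<in> aug_path j p' \<and> 0 < g j p') \<longrightarrow>
          total P g j \<le> total P g k)"
    by blast
qed

theorem theorem3:
  fixes D :: "'d set" and E :: "'e set"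
    and c :: "'e \<Rightarrow> real" and dr :: "'d \<Rightarrow> real"
    and P :: "'d \<Rightarrow> 'e set set"
    and \<theta> g :: "'d \<Rightarrow> 'e set \<Rightarrow> real"
  assumes "finite D" and "finite E"
    and "\<forall>e \<in> E. 0 < c e"
    and "\<forall>k \<in> D. 0 < dr k"
    and "\<forall>k \<in> D. finite (P k) \<and> (\<forall>p \<in> P k. p \<subseteq> E)"
    and "\<forall>k \<in> D. \<forall>p \<in> P k. 0 < \<theta> k p"
    and "weighted_waterfilling D E c dr P \<theta> g"
    and "\<forall>k \<in> D. \<forall>p \<in> P k. 0 < total P g k \<and> \<theta> k p = g k p / total P g k"
  shows "bandwidth_bottlenecked D E c dr P g"
proof (rule weighted_waterfilling_imp_bandwidth_bottlenecked)
  show "weighted_waterfilling D E c dr P \<theta> g"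
    by (fact assms(7))
  fix k p assume "k \<in> D" "p \<in> P k"
  then show "g k p / \<theta> k p = total P g k"
    using assms(6,8) by (intro rate_div_weight_at_fixed_point) auto
qed

end
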